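(* Let $(\Omega,\mathcal A)$ be a Borel space, $(X_\omega,d_\omega)_{\omega\in\Omega}$ a field of metric spaces, and $\mathcal L\subseteq\mathcal S(\Omega,X_\bullet)$ a set of sections satisfying: (a) $\omega\mapsto d_\omega(x_\omega,y_\omega)$ is Borel for all $x_\bullet,y_\bullet\in\mathcal L$, and (c) there is a countable family $\{x^n_\bullet\}_{n\ge1}\subseteq\mathcal L$ with $\{x^n_\omega\}_n$ dense in $X_\omega$ for every $\omega$. Then the following are equivalent: (b) if $y_\bullet\in\mathcal S(\Omega,X_\bullet)$ is such that $\omega\mapsto d_\omega(x_\omega,y_\omega)$ is Borel for all $x_\bullet\in\mathcal L$, then $y_\bullet\in\mathcal L$; (b') $\mathcal L$ is closed under pointwise limits and countable Borel gluings; (b'') $\mathcal L$ is closed under pointwise limits and finite Borel gluings.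
   Context: A section is a family $x_\bullet=(x_\omega)_{\omega\in\Omega}$ with $x_\omega\in X_\omega$; $\mathcal S(\Omega,X_\bullet)$ is the set of sections. If $(x^n_\bullet)_{n\ge1}$ are sections such that $(x^n_\omega)_n$ converges in $X_\omega$ for every $\omega$, the pointwise limit is the section $\omega\mapsto\lim_n x^n_\omega$. If $(x^n_\bullet)$ are sections and $\Omega=\bigsqcup_n\Omega_n$ is a countable (resp. finite) partition into Borel sets, the countable (resp. finite) Borel gluing is the section $x_\bullet$ with $x_\omega=x^n_\omega$ for $\omega\in\Omega_n$. *)

theory Defs
  imports "HOL-Analysis.Analysis" "HOL-Probability.Probability"
begin

definition sections :: "'w measure \<Rightarrow> ('w \<Rightarrow> 'a set) \<Rightarrow> ('w \<Rightarrow> 'a) set" where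
  "sections M X = Pi\<^sub>E (space M) X"

definition closed_under_pointwise_limits ::
  "'w measure \<Rightarrow> ('w \<Rightarrow> 'a set) \<Rightarrow> ('w \<Rightarrow> 'a \<Rightarrow> 'a \<Rightarrow> real) \<Rightarrow> ('w \<Rightarrow> 'a) set \<Rightarrow> bool" where
  "closed_under_pointwise_limits M X d L \<longleftrightarrow>
     (\<forall>xs y. (\<forall>n. xs n \<in> L) \<and> y \<in> sections M X \<and>
        (\<forall>w\<in>space M. limitin (Metric_space.mtopology (X w) (d w)) (\<lambda>n. xs n w) (y w) sequentially)
        \<longrightarrow> y \<in> L)"

definition closed_under_countable_gluing ::
  "'w measure \<Rightarrow> ('w \<Rightarrow> 'a set) \<Rightarrow> ('w \<Rightarrow> 'a) set \<Rightarrow> bool" where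
  "closed_under_countable_gluing M X L \<longleftrightarrow>
     (\<forall>(xs :: nat \<Rightarrow> 'w \<Rightarrow> 'a) P y. (\<forall>n. xs n \<in> L) \<and> (\<forall>n. P n \<in> sets M) \<and> disjoint_family P
        \<and> (\<Union>n. P n) = space M \<and> y \<in> sections M X \<and> (\<forall>n. \<forall>w\<in>P n. y w = xs n w)
        \<longrightarrow> y \<in> L)"

definition closed_under_finite_gluing ::
  "'w measure \<Rightarrow> ('w \<Rightarrow> 'a set) \<Rightarrow> ('w \<Rightarrow> 'a) set \<Rightarrow> bool" where
  "closed_under_finite_gluing M X L \<longleftrightarrow>
     (\<forall>(N :: nat) (xs :: nat \<Rightarrow> 'w \<Rightarrow> 'a) P y. (\<forall>n<N. xs n \<in> L) \<and> (\<forall>n<N. P n \<in> sets M)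
        \<and> disjoint_family_on P {..<N}
        \<and> (\<Union>n<N. P n) = space M \<and> y \<in> sections M X \<and> (\<forall>n<N. \<forall>w\<in>P n. y w = xs n w)
        \<longrightarrow> y \<in> L)"

end

theory Submission
  imports Defs
begin

(* The theorem is the cycle of implications
     (b) ==> pointwise limits and countable gluings     (distances to a limit are limits
                                                          of Borel functions; distances to
                                                          a gluing are glued Borel functions)
     countable gluings ==> finite gluings                (pad with empty pieces)
     limits and finite gluings ==> (b)                   (nearest-point approximation).
   For the last step, given y, glue xs 0, ..., xs N along the Borel partition "xs n is the
   first of xs 0, ..., xs N nearest to y"; the resulting sections lie in L and converge
   pointwise to y by density. *)

lemma (in Metric_space) limitin_dist_tendsto:
  assumes lim: "limitin mtopology f l sequentially" and a: "a \<in> M"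
  shows "(\<lambda>i. d a (f i)) \<longlonglongrightarrow> d a l"
proof (rule LIMSEQ_I)
  fix r :: real assume r: "0 < r"
  from lim have lM: "l \<in> M" and "eventually (\<lambda>i. f i \<in> M \<and> d (f i) l < r) sequentially"
    using r by (auto simp: limitin_metric)
  then obtain N where N: "\<And>n. n \<ge> N \<Longrightarrow> f n \<in> M \<and> d (f n) l < r"
    by (auto simp: eventually_sequentially)
  show "\<exists>N. \<forall>n\<ge>N. norm (d a (f n) - d a l) < r"
  proof (intro exI allI impI)
    fix n assume "N \<le> n"
    with N have fn: "f n \<in> M" "d (f n) l < r" by auto
    have "d a (f n) \<le> d a l + d l (f n)" and "d a l \<le> d a (f n) + d (f n) l"
      using triangle a lM fn(1) by blast+
    then show "norm (d a (f n) - d a l) < r" using fn(2) commute by auto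
  qed
qed

definition argmin_index :: "nat \<Rightarrow> (nat \<Rightarrow> real) \<Rightarrow> nat" where
  "argmin_index N g = (LEAST n. n < N \<and> (\<forall>m<N. g n \<le> g m))"

lemma argmin_index_minimal:
  assumes "0 < N"
  shows "argmin_index N g < N \<and> (\<forall>m<N. g (argmin_index N g) \<le> g m)"
proof -
  let ?S = "g ` {..<N}"
  have "Min ?S \<in> ?S" using assms by (intro Min_in) auto
  then obtain n where "n < N" "g n = Min ?S" by auto
  then have "\<exists>n. n < N \<and> (\<forall>m<N. g n \<le> g m)" by auto
  then show ?thesis unfolding argmin_index_def by (rule LeastI_ex)
qed

text \<open>Characterisation by inequalities; it makes the pieces of the nearest-point
  partition measurable and pairwise disjoint.\<close>

lemma argmin_index_eq_iff:
  assumes "0 < N"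
  shows "argmin_index N g = n \<longleftrightarrow> n < N \<and> (\<forall>m<N. g n \<le> g m) \<and> (\<forall>m<n. g n < g m)"
proof
  assume n: "argmin_index N g = n"
  have "g n < g m" if "m < n" for m
  proof (rule ccontr)
    assume "\<not> g n < g m"
    then have "m < N \<and> (\<forall>k<N. g m \<le> g k)"
      using argmin_index_minimal[OF assms, of g] n \<open>m < n\<close> by force
    then have "n \<le> m" using n unfolding argmin_index_def by (auto intro: Least_le)
    then show False using \<open>m < n\<close> by simp
  qed
  then show "n < N \<and> (\<forall>m<N. g n \<le> g m) \<and> (\<forall>m<n. g n < g m)"
    using argmin_index_minimal[OF assms, of g] n by auto
next
  assume n: "n < N \<and> (\<forall>m<N. g n \<le> g m) \<and> (\<forall>m<n. g n < g m)"
  show "argmin_index N g = n"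
    unfolding argmin_index_def
  proof (rule Least_equality)
    show "n < N \<and> (\<forall>m<N. g n \<le> g m)" using n by auto
    show "n \<le> m" if "m < N \<and> (\<forall>k<N. g m \<le> g k)" for m
      using n that by (meson leD leI)
  qed
qed

lemma measurable_argmin_index_eq:
  assumes [measurable]: "\<And>m. f m \<in> borel_measurable M" and "0 < N"
  shows "{w \<in> space M. argmin_index N (\<lambda>m. f m w) = n} \<in> sets M"
  unfolding argmin_index_eq_iff[OF \<open>0 < N\<close>] by measurable

lemma (in Metric_space) limitin_nearest_points:
  assumes y: "y \<in> mtopology closure_of range s" and s: "range s \<subseteq> M"
  shows "limitin mtopology (\<lambda>N. s (argmin_index (Suc N) (\<lambda>m. d (s m) y))) y sequentially"
  unfolding limitin_metric
proof (intro conjI allI impI)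
  show yM: "y \<in> M" using y closure_of_subset_topspace by fastforce
  fix e :: real assume "0 < e"
  then obtain n where n: "d (s n) y < e"
    using y commute unfolding metric_closure_of by fastforce
  show "\<forall>\<^sub>F N in sequentially. s (argmin_index (Suc N) (\<lambda>m. d (s m) y)) \<in> M \<and>
                               d (s (argmin_index (Suc N) (\<lambda>m. d (s m) y))) y < e"
    unfolding eventually_sequentially
  proof (intro exI allI impI)
    fix N assume "n \<le> N"
    then have "d (s (argmin_index (Suc N) (\<lambda>m. d (s m) y))) y \<le> d (s n) y"
      using argmin_index_minimal[of "Suc N" "\<lambda>m. d (s m) y"] by simp
    then show "s (argmin_index (Suc N) (\<lambda>m. d (s m) y)) \<in> M \<and>
               d (s (argmin_index (Suc N) (\<lambda>m. d (s m) y))) y < e"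
      using n s by auto
  qed
qed

definition determined_by_distances ::
  "'w measure \<Rightarrow> ('w \<Rightarrow> 'a set) \<Rightarrow> ('w \<Rightarrow> 'a \<Rightarrow> 'a \<Rightarrow> real) \<Rightarrow> ('w \<Rightarrow> 'a) set \<Rightarrow> bool" where
  "determined_by_distances M X d L \<longleftrightarrow>
     (\<forall>y\<in>sections M X. (\<forall>x\<in>L. (\<lambda>w. d w (x w) (y w)) \<in> borel_measurable M) \<longrightarrow> y \<in> L)"

text \<open>Padding a finite partition with empty pieces reduces finite to countable gluing.\<close>

lemma finite_gluing_if_countable_gluing:
  fixes M :: "'w measure" and L :: "('w \<Rightarrow> 'a) set"
  assumes G: "closed_under_countable_gluing M X L" and "x0 \<in> L"
  shows "closed_under_finite_gluing M X L"
  unfolding closed_under_finite_gluing_def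
proof (intro allI impI, elim conjE)
  fix N :: nat and zs :: "nat \<Rightarrow> 'w \<Rightarrow> 'a" and P y
  assume zs: "\<forall>n<N. zs n \<in> L" and P: "\<forall>n<N. P n \<in> sets M" and dj: "disjoint_family_on P {..<N}"
    and U: "(\<Union>n<N. P n) = space M" and y: "y \<in> sections M X"
    and eq: "\<forall>n<N. \<forall>w\<in>P n. y w = zs n w"
  define zs' where "zs' n = (if n < N then zs n else x0)" for n
  define P' where "P' n = (if n < N then P n else {})" for n
  have "disjoint_family P'" using dj by (auto simp: P'_def disjoint_family_on_def)
  moreover have "(\<Union>n. P' n) = space M" using U by (auto simp: P'_def)
  ultimately show "y \<in> L"
    using G zs P y eq \<open>x0 \<in> L\<close> unfolding closed_under_countable_gluing_def
    by (elim allE[of _ zs'] allE[of _ P'] allE[of _ y]) (auto simp: zs'_def P'_def)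
qed

locale field_of_metric_spaces =
  fixes M :: "'w measure" and X :: "'w \<Rightarrow> 'a set" and d :: "'w \<Rightarrow> 'a \<Rightarrow> 'a \<Rightarrow> real"
  assumes metric: "\<And>w. w \<in> space M \<Longrightarrow> Metric_space (X w) (d w)"
begin

text \<open>(b) implies closure under pointwise limits: distances to the limit are pointwise
  limits of Borel functions.\<close>

lemma limits_closed_if_determined:
  assumes L_sub: "L \<subseteq> sections M X"
    and a: "\<And>x y. x \<in> L \<Longrightarrow> y \<in> L \<Longrightarrow> (\<lambda>w. d w (x w) (y w)) \<in> borel_measurable M"
    and B: "determined_by_distances M X d L"
  shows "closed_under_pointwise_limits M X d L"
  unfolding closed_under_pointwise_limits_def
proof (intro allI impI, elim conjE)
  fix zs y assume zs: "\<forall>n. zs n \<in> L" and y: "y \<in> sections M X"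
    and lim: "\<forall>w\<in>space M. limitin (Metric_space.mtopology (X w) (d w)) (\<lambda>n. zs n w) (y w) sequentially"
  have "(\<lambda>w. d w (x w) (y w)) \<in> borel_measurable M" if x: "x \<in> L" for x
  proof (rule borel_measurable_LIMSEQ_real[where u="\<lambda>i w. d w (x w) (zs i w)"])
    fix w assume w: "w \<in> space M"
    have "x w \<in> X w" using L_sub x w by (auto simp: sections_def)
    then show "(\<lambda>i. d w (x w) (zs i w)) \<longlonglongrightarrow> d w (x w) (y w)"
      using Metric_space.limitin_dist_tendsto[OF metric[OF w]] lim w by blast
  qed (use a x zs in auto)
  then show "y \<in> L" using B y unfolding determined_by_distances_def by blast
qed

text \<open>(b) implies closure under countable Borel gluing: distances to the glued section are
  Borel on each piece.\<close>

lemma countable_gluing_if_determined: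
  assumes a: "\<And>x y. x \<in> L \<Longrightarrow> y \<in> L \<Longrightarrow> (\<lambda>w. d w (x w) (y w)) \<in> borel_measurable M"
    and B: "determined_by_distances M X d L"
  shows "closed_under_countable_gluing M X L"
  unfolding closed_under_countable_gluing_def
proof (intro allI impI, elim conjE)
  fix zs :: "nat \<Rightarrow> 'w \<Rightarrow> 'a" and P y
  assume zs: "\<forall>n. zs n \<in> L" and P: "\<forall>n. P n \<in> sets M"
    and U: "(\<Union>n. P n) = space M" and y: "y \<in> sections M X" and eq: "\<forall>n. \<forall>w\<in>P n. y w = zs n w"
  have "(\<lambda>w. d w (x w) (y w)) \<in> borel_measurable M" if x: "x \<in> L" for x
  proof (rule measurable_piecewise_restrict2[where A=P])
    fix n
    show "\<exists>h\<in>borel_measurable M. \<forall>w\<in>P n. d w (x w) (y w) = h w"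
      using a[OF x, of "zs n"] zs eq by auto
  qed (use P U in auto)
  then show "y \<in> L" using B y unfolding determined_by_distances_def by blast
qed

text \<open>Pointwise limits and finite gluings imply (b): the sections gluing xs 0, ..., xs N
  along the "first nearest point to y" partition lie in L and converge to y.\<close>

lemma determined_if_limits_and_finite_gluing:
  fixes xs :: "nat \<Rightarrow> 'w \<Rightarrow> 'a"
  assumes L_sub: "L \<subseteq> sections M X" and c_L: "\<And>n. xs n \<in> L"
    and c_dense: "\<And>w. w \<in> space M \<Longrightarrow>
        Metric_space.mtopology (X w) (d w) closure_of (range (\<lambda>n. xs n w)) = X w"
    and Lim: "closed_under_pointwise_limits M X d L"
    and G: "closed_under_finite_gluing M X L"
  shows "determined_by_distances M X d L"
  unfolding determined_by_distances_def
proof (intro ballI impI)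
  fix y assume y: "y \<in> sections M X"
    and ymeas: "\<forall>x\<in>L. (\<lambda>w. d w (x w) (y w)) \<in> borel_measurable M"
  have xsX: "xs n w \<in> X w" if "w \<in> space M" for n w
    using L_sub c_L that by (auto simp: sections_def)
  define near where "near N w = argmin_index (Suc N) (\<lambda>m. d w (xs m w) (y w))" for N w
  define z where "z N w = (if w \<in> space M then xs (near N w) w else undefined)" for N w
  define piece where "piece N n = {w \<in> space M. near N w = n}" for N n
  have z_in_L: "z N \<in> L" for N
  proof -
    have "piece N n \<in> sets M" for n
      unfolding piece_def near_def using ymeas c_L by (intro measurable_argmin_index_eq) auto
    moreover have "disjoint_family_on (piece N) {..<Suc N}"
      by (auto simp: disjoint_family_on_def piece_def)
    moreover have "(\<Union>n<Suc N. piece N n) = space M"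
      using argmin_index_minimal by (auto simp: piece_def near_def)
    moreover have "z N \<in> sections M X"
      using xsX by (auto simp: sections_def z_def)
    ultimately show ?thesis
      using G c_L unfolding closed_under_finite_gluing_def
      by (elim allE[of _ "Suc N"] allE[of _ xs] allE[of _ "piece N"] allE[of _ "z N"])
         (auto simp: z_def piece_def)
  qed
  have "limitin (Metric_space.mtopology (X w) (d w)) (\<lambda>N. z N w) (y w) sequentially"
    if w: "w \<in> space M" for w
  proof -
    have "y w \<in> X w" using y w by (auto simp: sections_def)
    then show ?thesis
      using Metric_space.limitin_nearest_points[OF metric[OF w], of "y w" "\<lambda>n. xs n w"]
        c_dense[OF w] xsX[OF w] w by (auto simp: z_def near_def)
  qed
  then show "y \<in> L"
    using Lim z_in_L y unfolding closed_under_pointwise_limits_def by blast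
qed

end

theorem mainTheorem2:
  fixes M :: "'w measure" and X :: "'w \<Rightarrow> 'a set" and d :: "'w \<Rightarrow> 'a \<Rightarrow> 'a \<Rightarrow> real"
    and L :: "('w \<Rightarrow> 'a) set" and xs :: "nat \<Rightarrow> 'w \<Rightarrow> 'a"
  assumes metric: "\<And>w. w \<in> space M \<Longrightarrow> Metric_space (X w) (d w)"
    and L_sub: "L \<subseteq> sections M X"
    and a: "\<And>x y. x \<in> L \<Longrightarrow> y \<in> L \<Longrightarrow> (\<lambda>w. d w (x w) (y w)) \<in> borel_measurable M"
    and c_L: "\<And>n. xs n \<in> L"
    and c_dense: "\<And>w. w \<in> space M \<Longrightarrow>
        Metric_space.mtopology (X w) (d w) closure_of (range (\<lambda>n. xs n w)) = X w"
  shows "((\<forall>y\<in>sections M X. (\<forall>x\<in>L. (\<lambda>w. d w (x w) (y w)) \<in> borel_measurable M) \<longrightarrow> y \<in> L)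
           \<longleftrightarrow> (closed_under_pointwise_limits M X d L \<and> closed_under_countable_gluing M X L))
       \<and> ((closed_under_pointwise_limits M X d L \<and> closed_under_countable_gluing M X L)
           \<longleftrightarrow> (closed_under_pointwise_limits M X d L \<and> closed_under_finite_gluing M X L))"
proof -
  interpret field_of_metric_spaces M X d
    using metric by (rule field_of_metric_spaces.intro)
  have "determined_by_distances M X d L \<Longrightarrow>
        closed_under_pointwise_limits M X d L \<and> closed_under_countable_gluing M X L"
    using limits_closed_if_determined[OF L_sub a] countable_gluing_if_determined[OF a] by blast
  moreover have "closed_under_countable_gluing M X L \<Longrightarrow> closed_under_finite_gluing M X L"
    using finite_gluing_if_countable_gluing c_L by blast
  moreover have "closed_under_pointwise_limits M X d L \<Longrightarrow> closed_under_finite_gluing M X L \<Longrightarrow>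
        determined_by_distances M X d L"
    using determined_if_limits_and_finite_gluing[OF L_sub c_L c_dense] by blast
  ultimately show ?thesis unfolding determined_by_distances_def by blast
qed

end
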